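(* Let $\alpha_1,\alpha_2,\alpha_3,\alpha_4$ be positive integers. The graph $C(\alpha_1,\alpha_2,\alpha_3,\alpha_4)$ has exactly four distinct Laplacian eigenvalues if and only if, writing $\alpha=\alpha_1$, it is one of $C(\alpha,1,1,1)$, $C(\alpha,1,1+\alpha,1)$, $C(\alpha,1,1,2+\alpha)$, $C(\alpha,1,1+\alpha,1+\alpha)$, $C(\alpha,1,1+\alpha,2+2\alpha)$. Consequently, these are exactly the $\mathcal{C}$-graphs (with an even number $k$ of parts) having exactly four distinct Laplacian eigenvalues.
   Context: $C(\alpha_1,\dots,\alpha_k)$ is defined recursively by $C(\alpha_1)=\overline{K_{\alpha_1}}$ (edgeless graph) and $C(\alpha_1,\dots,\alpha_i)=\overline{C(\alpha_1,\dots,\alpha_{i-1})\cup K_{\alpha_i}}$ for $i=2,\dots,k$ (disjoint union, then complement); with $k$ even it is called a $\mathcal{C}$-graph. Equivalently for $k$ even, with $\pi_i$ the $\alpha_i$ vertices introduced at step $i$: $\pi_i$ is a clique for $i$ odd, independent for $i$ even, and for $i<j$ vertices of $\pi_i,\pi_j$ are adjacent iff $j$ is even. Laplacian eigenvalues are those of $L=D-A$. *)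

theory Defs
  imports Main "Jordan_Normal_Form.Char_Poly"
begin

text \<open>Graphs on vertex set {0..<n} given by an adjacency predicate on nat.
  cg_rev takes the part sizes in reverse order (last part first).
  Step: disjoint union of the previous graph (on {0..<n}) with a clique K_a on
  {n..<n+a}, then complement on {0..<n+a}. Starting from the empty graph on no
  vertices, one step yields the edgeless graph on a vertices, i.e. C(alpha_1).\<close>

fun cg_rev :: "nat list \<Rightarrow> nat \<Rightarrow> nat \<Rightarrow> bool" where
  "cg_rev [] = (\<lambda>u v. False)"
| "cg_rev (a # xs) =
     (\<lambda>u v. let n = sum_list xs in
        u \<noteq> v \<and> u < n + a \<and> v < n + a \<and>
        \<not> ((u < n \<and> v < n \<and> cg_rev xs u v) \<or> (n \<le> u \<and> n \<le> v)))"

definition cgraph :: "nat list \<Rightarrow> nat \<Rightarrow> nat \<Rightarrow> bool" where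
  "cgraph as = cg_rev (rev as)"

definition laplacian :: "nat \<Rightarrow> (nat \<Rightarrow> nat \<Rightarrow> bool) \<Rightarrow> real mat" where
  "laplacian n adj = mat n n (\<lambda>(i, j).
     if i = j then real (card {k. k < n \<and> adj i k})
     else if adj i j then -1 else 0)"

definition lap_eigenvalues :: "nat list \<Rightarrow> real set" where
  "lap_eigenvalues as = {\<mu>. eigenvalue (laplacian (sum_list as) (cgraph as)) \<mu>}"

end

theory Submission
  imports Defs
begin

text \<open>Since \<open>L(complement G) = N I - J - L(G)\<close>, a Laplacian eigenvector of \<open>G\<close> orthogonal to the
  all-ones vector for \<open>\<mu>\<close> is one of the complement for \<open>N - \<mu>\<close>. Adding a clique \<open>K_a\<close> to a graph
  on \<open>n\<close> vertices keeps the old eigenvectors (extended by zero), adds the eigenvalue \<open>a\<close> on vectors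
  supported on the clique and summing to zero (when \<open>a \<ge> 2\<close>), and the eigenvalue \<open>0\<close> of the
  vector that is constant on both parts. So each step of the construction turns the spectrum \<open>S\<close>
  into \<open>{0} \<union> (n + a - S) \<union> {n | a \<ge> 2}\<close>, gaining at least one new eigenvalue; with \<open>k\<close> parts
  there are at least \<open>k\<close> distinct eigenvalues, and two parts give at most three. For four parts
  four eigenvalues are always present and three more are optional, and exactly four distinct
  eigenvalues means that every optional one coincides with a mandatory one.\<close>

definition lap_action :: "nat \<Rightarrow> (nat \<Rightarrow> nat \<Rightarrow> bool) \<Rightarrow> (nat \<Rightarrow> real) \<Rightarrow> nat \<Rightarrow> real" where
  "lap_action n adj v i = (\<Sum>j<n. if adj i j then v i - v j else 0)"

definition lap_eigen :: "nat \<Rightarrow> (nat \<Rightarrow> nat \<Rightarrow> bool) \<Rightarrow> real \<Rightarrow> bool" where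
  "lap_eigen n adj \<mu> \<longleftrightarrow> (\<exists>v. (\<exists>i<n. v i \<noteq> 0) \<and> (\<forall>i<n. lap_action n adj v i = \<mu> * v i))"

lemma laplacian_row_sum:
  assumes "\<not> adj i i" and "i < n"
  shows "(\<Sum>j<n. laplacian n adj $$ (i, j) * v j) = lap_action n adj v i"
proof -
  have "(\<Sum>j<n. laplacian n adj $$ (i, j) * v j)
      = (\<Sum>j<n. (if i = j then real (card {k. k < n \<and> adj i k}) * v i else 0)
                 - (if adj i j then v j else 0))"
    using assms by (intro sum.cong) (auto simp: laplacian_def)
  also have "\<dots> = real (card {k. k < n \<and> adj i k}) * v i - (\<Sum>j<n. if adj i j then v j else 0)"
    using assms by (simp add: sum_subtractf)
  also have "real (card {k. k < n \<and> adj i k}) * v i = (\<Sum>j<n. if adj i j then v i else 0)"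
    by (simp add: sum.If_cases Int_def conj_commute)
  finally show ?thesis
    unfolding lap_action_def by (simp add: sum_subtractf[symmetric] if_distrib cong: if_cong)
qed

lemma eigenvalue_laplacian_iff:
  assumes irrefl: "\<And>i. \<not> adj i i"
  shows "eigenvalue (laplacian n adj) \<mu> \<longleftrightarrow> lap_eigen n adj \<mu>"
proof -
  have mult_vec: "(laplacian n adj *\<^sub>v vec n f) $ i = lap_action n adj f i" if "i < n" for f i
    using that laplacian_row_sum[where adj = adj, OF irrefl that]
    by (auto simp: laplacian_def scalar_prod_def lessThan_atLeast0 intro!: sum.cong)
  show ?thesis
  proof
    assume "eigenvalue (laplacian n adj) \<mu>"
    then obtain v where v: "v \<in> carrier_vec n" "v \<noteq> 0\<^sub>v n" "laplacian n adj *\<^sub>v v = \<mu> \<cdot>\<^sub>v v"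
      unfolding eigenvalue_def eigenvector_def by (auto simp: laplacian_def)
    have "v = vec n (\<lambda>j. v $ j)" using v(1) by auto
    then have "lap_action n adj (\<lambda>j. v $ j) i = \<mu> * v $ i" if "i < n" for i
      using mult_vec[OF that, of "\<lambda>j. v $ j"] v(1,3) that by (metis index_smult_vec(1) carrier_vecD)
    moreover have "\<exists>i<n. v $ i \<noteq> 0" using v(1,2) by (auto simp: vec_eq_iff)
    ultimately show "lap_eigen n adj \<mu>" unfolding lap_eigen_def by blast
  next
    assume "lap_eigen n adj \<mu>"
    then obtain f where f: "\<exists>i<n. f i \<noteq> 0" "\<And>i. i < n \<Longrightarrow> lap_action n adj f i = \<mu> * f i"
      unfolding lap_eigen_def by blast
    have "eigenvector (laplacian n adj) (vec n f) \<mu>"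
      unfolding eigenvector_def using f mult_vec
      by (auto simp: laplacian_def vec_eq_iff intro!: eq_vecI)
    then show "eigenvalue (laplacian n adj) \<mu>" unfolding eigenvalue_def by blast
  qed
qed

lemma lap_action_cong:
  "(\<And>j. j < n \<Longrightarrow> v j = w j) \<Longrightarrow> i < n \<Longrightarrow> lap_action n adj v i = lap_action n adj w i"
  unfolding lap_action_def by (rule sum.cong) auto

lemma lap_action_const: "lap_action n adj (\<lambda>_. c) i = 0"
  unfolding lap_action_def by (rule sum.neutral) simp

lemma lap_eigen_zero: "0 < n \<Longrightarrow> lap_eigen n adj 0"
  unfolding lap_eigen_def by (intro exI[of _ "\<lambda>_. 1"]) (auto simp: lap_action_const)

lemma sum_lap_action_eq_0:
  assumes sym: "\<And>i j. adj i j = adj j i"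
  shows "(\<Sum>i<n. lap_action n adj v i) = 0"
proof -
  define f where "f i j = (if adj i j then v i - v j else 0)" for i j
  have "(\<Sum>i<n. lap_action n adj v i) = (\<Sum>i<n. \<Sum>j<n. f i j)"
    by (simp add: lap_action_def f_def)
  also have "\<dots> = (\<Sum>j<n. \<Sum>i<n. f i j)" by (rule sum.swap)
  also have "\<dots> = - (\<Sum>j<n. \<Sum>i<n. f j i)"
    unfolding sum_negf[symmetric] using sym by (intro sum.cong) (auto simp: f_def)
  finally show ?thesis by (simp add: lap_action_def f_def)
qed

lemma lap_eigenvector_sum_eq_0:
  assumes sym: "\<And>i j. adj i j = adj j i" and "\<mu> \<noteq> 0"
    and eigen: "\<And>i. i < n \<Longrightarrow> lap_action n adj v i = \<mu> * v i"
  shows "(\<Sum>i<n. v i) = 0"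
proof -
  have "\<mu> * (\<Sum>i<n. v i) = (\<Sum>i<n. lap_action n adj v i)"
    using eigen by (simp add: sum_distrib_left)
  then show ?thesis using sum_lap_action_eq_0[OF sym] \<open>\<mu> \<noteq> 0\<close> by simp
qed

definition graph_complement :: "nat \<Rightarrow> (nat \<Rightarrow> nat \<Rightarrow> bool) \<Rightarrow> nat \<Rightarrow> nat \<Rightarrow> bool" where
  "graph_complement n adj u w \<longleftrightarrow> u \<noteq> w \<and> u < n \<and> w < n \<and> \<not> adj u w"

lemma graph_complement_sym:
  "(\<And>i j. adj i j = adj j i) \<Longrightarrow> graph_complement n adj u w = graph_complement n adj w u"
  unfolding graph_complement_def by auto

lemma lap_action_graph_complement:
  assumes "i < n"
  shows "lap_action n (graph_complement n adj) v i = n * v i - (\<Sum>j<n. v j) - lap_action n adj v i"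
proof -
  have "lap_action n (graph_complement n adj) v i
      = (\<Sum>j<n. (v i - v j) - (if adj i j then v i - v j else 0))"
    unfolding lap_action_def graph_complement_def using assms by (intro sum.cong) auto
  then show ?thesis by (simp add: lap_action_def sum_subtractf)
qed

lemma lap_eigenvector_graph_complement_iff:
  assumes "(\<Sum>j<n. v j) = 0"
  shows "(\<forall>i<n. lap_action n (graph_complement n adj) v i = \<mu> * v i)
     \<longleftrightarrow> (\<forall>i<n. lap_action n adj v i = (n - \<mu>) * v i)"
  using assms by (simp add: lap_action_graph_complement left_diff_distrib) (smt (verit))

text \<open>The clique occupies the vertices from \<open>n\<close> on; its loops are harmless since
  \<open>lap_action\<close> ignores the diagonal.\<close>
definition union_clique :: "nat \<Rightarrow> (nat \<Rightarrow> nat \<Rightarrow> bool) \<Rightarrow> nat \<Rightarrow> nat \<Rightarrow> bool" where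
  "union_clique n adj u w \<longleftrightarrow> (u < n \<and> w < n \<and> adj u w) \<or> (n \<le> u \<and> n \<le> w)"

lemma sum_lessThan_add_split:
  fixes n a :: nat
  shows "(\<Sum>j<n + a. f j) = (\<Sum>j<n. f j) + (\<Sum>j\<in>{n..<n + a}. f j)"
  unfolding lessThan_atLeast0 by (rule sum.atLeastLessThan_concat[symmetric]) simp_all

lemma lap_action_union_clique_low:
  assumes "i < n"
  shows "lap_action (n + a) (union_clique n adj) v i = lap_action n adj v i"
proof -
  have "lap_action (n + a) (union_clique n adj) v i
      = (\<Sum>j<n + a. if j < n then (if adj i j then v i - v j else 0) else 0)"
    unfolding lap_action_def union_clique_def using assms by (intro sum.cong) auto
  then show ?thesis by (simp add: sum_lessThan_add_split lap_action_def)
qed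

lemma lap_action_union_clique_high:
  assumes bounded: "\<And>u w. adj u w \<Longrightarrow> u < n" and "n \<le> i"
  shows "lap_action (n + a) (union_clique n adj) v i = a * v i - (\<Sum>j\<in>{n..<n + a}. v j)"
proof -
  have "lap_action (n + a) (union_clique n adj) v i = (\<Sum>j<n + a. if j < n then 0 else v i - v j)"
    unfolding lap_action_def union_clique_def using assms by (intro sum.cong) auto
  also have "\<dots> = (\<Sum>j\<in>{n..<n + a}. v i - v j)"
    by (simp add: sum_lessThan_add_split)
  finally show ?thesis by (simp add: sum_subtractf)
qed

definition complement_union_clique :: "nat \<Rightarrow> (nat \<Rightarrow> nat \<Rightarrow> bool) \<Rightarrow> nat \<Rightarrow> nat \<Rightarrow> nat \<Rightarrow> bool" where
  "complement_union_clique n adj a = graph_complement (n + a) (union_clique n adj)"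

context
  fixes n a :: nat and G :: "nat \<Rightarrow> nat \<Rightarrow> bool"
  assumes G_sym: "\<And>u w. G u w = G w u"
    and G_bounded: "\<And>u w. G u w \<Longrightarrow> u < n \<and> w < n"
begin

lemma lap_eigen_complement_union_cliqueI:
  fixes v :: "nat \<Rightarrow> real" and \<mu> :: real
  assumes nonzero: "\<exists>i<n + a. v i \<noteq> 0" and sum_zero: "(\<Sum>j<n + a. v j) = 0"
    and low: "\<And>i. i < n \<Longrightarrow> lap_action n G v i = (n + a - \<mu>) * v i"
    and high: "\<And>i. n \<le> i \<Longrightarrow> i < n + a \<Longrightarrow>
       a * v i - (\<Sum>j\<in>{n..<n + a}. v j) = (n + a - \<mu>) * v i"
  shows "lap_eigen (n + a) (complement_union_clique n G a) \<mu>"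
proof -
  have "lap_action (n + a) (union_clique n G) v i = (n + a - \<mu>) * v i" if "i < n + a" for i
  proof (cases "i < n")
    case True
    then show ?thesis using low lap_action_union_clique_low by simp
  next
    case False
    then show ?thesis
      using that high lap_action_union_clique_high[of G n i] G_bounded by simp
  qed
  then have "\<forall>i<n + a. lap_action (n + a) (graph_complement (n + a) (union_clique n G)) v i = \<mu> * v i"
    using lap_eigenvector_graph_complement_iff[OF sum_zero] by simp
  then show ?thesis
    using nonzero unfolding lap_eigen_def complement_union_clique_def by blast
qed

lemma lap_eigen_complement_union_clique_clique:
  assumes "2 \<le> a"
  shows "lap_eigen (n + a) (complement_union_clique n G a) n"
proof -
  define v :: "nat \<Rightarrow> real" where "v j = (if j = n then 1 else 0) - (if j = Suc n then 1 else 0)" for j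
  have high_sum: "(\<Sum>j\<in>{n..<n + a}. v j) = 0"
    using assms by (simp add: v_def sum_subtractf)
  show ?thesis
  proof (rule lap_eigen_complement_union_cliqueI)
    show "\<exists>i<n + a. v i \<noteq> 0" using assms by (intro exI[of _ n]) (simp add: v_def)
    show "(\<Sum>j<n + a. v j) = 0"
      using high_sum by (simp add: sum_lessThan_add_split v_def)
    show "lap_action n G v i = (n + a - real n) * v i" if "i < n" for i
      using that lap_action_cong[of n v "\<lambda>_. 0", OF _ that] by (simp add: v_def lap_action_const)
    show "a * v i - (\<Sum>j\<in>{n..<n + a}. v j) = (n + a - real n) * v i" for i
      using high_sum by simp
  qed
qed

lemma lap_eigen_complement_union_clique_size:
  assumes "0 < a" and "0 < n"
  shows "lap_eigen (n + a) (complement_union_clique n G a) (n + a)"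
proof -
  define v :: "nat \<Rightarrow> real" where "v j = (if j < n then real a else - real n)" for j
  have high_sum: "(\<Sum>j\<in>{n..<n + a}. v j) = - (real n * real a)"
    by (simp add: v_def)
  have low_sum: "(\<Sum>j<n. v j) = real n * real a"
    by (simp add: v_def)
  show ?thesis
  proof (rule lap_eigen_complement_union_cliqueI)
    show "\<exists>i<n + a. v i \<noteq> 0" using assms by (auto simp: v_def)
    show "(\<Sum>j<n + a. v j) = 0"
      unfolding sum_lessThan_add_split low_sum high_sum by simp
    show "lap_action n G v i = (n + a - real (n + a)) * v i" if "i < n" for i
      using lap_action_cong[of n v "\<lambda>_. real a", OF _ that] lap_action_const
      by (simp add: v_def)
    show "a * v i - (\<Sum>j\<in>{n..<n + a}. v j) = (n + a - real (n + a)) * v i" if "n \<le> i" for i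
      using that unfolding high_sum by (simp add: v_def)
  qed
qed

lemma lap_eigen_complement_union_clique_shift:
  fixes \<nu> :: real
  assumes "\<nu> \<noteq> 0" and eigen: "lap_eigen n G \<nu>"
  shows "lap_eigen (n + a) (complement_union_clique n G a) (n + a - \<nu>)"
proof -
  obtain w where w_nonzero: "\<exists>i<n. w i \<noteq> 0"
    and w_eigen: "\<And>i. i < n \<Longrightarrow> lap_action n G w i = \<nu> * w i"
    using eigen unfolding lap_eigen_def by blast
  have w_sum: "(\<Sum>i<n. w i) = 0"
    using lap_eigenvector_sum_eq_0[OF G_sym \<open>\<nu> \<noteq> 0\<close> w_eigen] .
  define v :: "nat \<Rightarrow> real" where "v j = (if j < n then w j else 0)" for j
  have low_sum: "(\<Sum>j<n. v j) = 0"
    using w_sum by (simp add: v_def)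
  have high_sum: "(\<Sum>j\<in>{n..<n + a}. v j) = 0"
    by (simp add: v_def)
  show ?thesis
  proof (rule lap_eigen_complement_union_cliqueI)
    show "\<exists>i<n + a. v i \<noteq> 0" using w_nonzero by (auto simp: v_def)
    show "(\<Sum>j<n + a. v j) = 0"
      unfolding sum_lessThan_add_split low_sum high_sum by simp
    show "lap_action n G v i = (n + a - (n + a - \<nu>)) * v i" if "i < n" for i
      using that w_eigen lap_action_cong[of n v w, OF _ that] by (simp add: v_def)
    show "a * v i - (\<Sum>j\<in>{n..<n + a}. v j) = (n + a - (n + a - \<nu>)) * v i" if "n \<le> i" for i
      using that unfolding high_sum by (simp add: v_def)
  qed
qed

lemma complement_union_clique_sym:
  "complement_union_clique n G a u w = complement_union_clique n G a w u"
  unfolding complement_union_clique_def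
  by (rule graph_complement_sym) (auto simp: union_clique_def G_sym)

lemma lap_eigen_complement_union_clique_cases:
  fixes \<mu> :: real
  assumes "0 < a" and "\<mu> \<noteq> 0" and eigen: "lap_eigen (n + a) (complement_union_clique n G a) \<mu>"
  shows "(\<exists>\<nu>::real. lap_eigen n G \<nu> \<and> \<mu> = n + a - \<nu>) \<or> (2 \<le> a \<and> \<mu> = n)"
proof -
  obtain v where v_nonzero: "\<exists>i<n + a. v i \<noteq> 0"
    and v_eigen: "\<And>i. i < n + a \<Longrightarrow> lap_action (n + a) (complement_union_clique n G a) v i = \<mu> * v i"
    using eigen unfolding lap_eigen_def by blast
  have v_sum: "(\<Sum>j<n + a. v j) = 0"
    by (rule lap_eigenvector_sum_eq_0[OF complement_union_clique_sym \<open>\<mu> \<noteq> 0\<close> v_eigen])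
  have H_eigen: "lap_action (n + a) (union_clique n G) v i = (n + a - \<mu>) * v i" if "i < n + a" for i
    using v_eigen lap_eigenvector_graph_complement_iff[OF v_sum] that
    unfolding complement_union_clique_def by blast
  show ?thesis
  proof (cases "\<exists>i<n. v i \<noteq> 0")
    case True
    have "lap_action n G v i = (n + a - \<mu>) * v i" if "i < n" for i
      using H_eigen[of i] lap_action_union_clique_low[OF that] that by simp
    then have "lap_eigen n G (n + a - \<mu>)"
      using True unfolding lap_eigen_def by blast
    then show ?thesis by auto
  next
    case False
    then obtain i where i: "n \<le> i" "i < n + a" "v i \<noteq> 0"
      using v_nonzero by (meson not_le)
    have high_sum: "(\<Sum>j\<in>{n..<n + a}. v j) = 0"
      using v_sum False by (simp add: sum_lessThan_add_split)
    have "a * v i = (n + a - \<mu>) * v i"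
      using H_eigen[OF i(2)] lap_action_union_clique_high[of G n i a v] G_bounded i(1) high_sum
      by simp
    then have "\<mu> = n" using i(3) by simp
    moreover have "a \<noteq> 1"
    proof
      assume "a = 1"
      then have "i = n" and "v n = 0" using i(1,2) high_sum by auto
      then show False using i(3) by simp
    qed
    ultimately show ?thesis using \<open>0 < a\<close> by auto
  qed
qed

lemma lap_eigen_complement_union_clique_iff:
  fixes \<mu> :: real
  assumes "0 < a"
  shows "lap_eigen (n + a) (complement_union_clique n G a) \<mu> \<longleftrightarrow>
    \<mu> = 0 \<or> (\<exists>\<nu>::real. lap_eigen n G \<nu> \<and> \<mu> = n + a - \<nu>) \<or> (2 \<le> a \<and> \<mu> = n)"
proof
  assume "lap_eigen (n + a) (complement_union_clique n G a) \<mu>"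
  then show "\<mu> = 0 \<or> (\<exists>\<nu>::real. lap_eigen n G \<nu> \<and> \<mu> = n + a - \<nu>) \<or> (2 \<le> a \<and> \<mu> = n)"
    using lap_eigen_complement_union_clique_cases[OF assms] by blast
next
  have "lap_eigen (n + a) (complement_union_clique n G a) (n + a - \<nu>)" if "lap_eigen n G \<nu>" for \<nu> :: real
  proof (cases "\<nu> = 0")
    case True
    have "0 < n" using that unfolding lap_eigen_def by auto
    then show ?thesis
      using lap_eigen_complement_union_clique_size[OF assms] True by simp
  qed (rule lap_eigen_complement_union_clique_shift[OF _ that])
  then show "\<mu> = 0 \<or> (\<exists>\<nu>::real. lap_eigen n G \<nu> \<and> \<mu> = n + a - \<nu>) \<or> (2 \<le> a \<and> \<mu> = n)
      \<Longrightarrow> lap_eigen (n + a) (complement_union_clique n G a) \<mu>"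
    using assms lap_eigen_zero[of "n + a"] lap_eigen_complement_union_clique_clique by auto
qed

end

lemma cg_rev_irrefl: "\<not> cg_rev xs u u"
  by (cases xs) (auto simp: Let_def)

lemma cg_rev_bounded: "cg_rev xs u w \<Longrightarrow> u < sum_list xs \<and> w < sum_list xs"
  by (cases xs) (auto simp: Let_def)

lemma cg_rev_sym: "cg_rev xs u w = cg_rev xs w u"
  by (induction xs arbitrary: u w) (auto simp: Let_def)

lemma cg_rev_Cons:
  "cg_rev (a # xs) = complement_union_clique (sum_list xs) (cg_rev xs) a"
  by (auto simp: fun_eq_iff Let_def complement_union_clique_def graph_complement_def union_clique_def)

text \<open>The Laplacian spectrum of \<^const>\<open>cg_rev\<close>; all eigenvalues are integers. The truncated
  subtraction is harmless since no element exceeds \<open>sum_list xs\<close>.\<close>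
fun cg_spectrum :: "nat list \<Rightarrow> nat set" where
  "cg_spectrum [] = {}"
| "cg_spectrum (a # xs) = insert 0 ((\<lambda>\<nu>. sum_list xs + a - \<nu>) ` cg_spectrum xs
     \<union> (if 2 \<le> a then {sum_list xs} else {}))"

lemma cg_spectrum_le: "\<nu> \<in> cg_spectrum xs \<Longrightarrow> \<nu> \<le> sum_list xs"
  by (induction xs arbitrary: \<nu>) (auto split: if_splits)

lemma finite_cg_spectrum: "finite (cg_spectrum xs)"
  by (induction xs) auto

lemma lap_eigen_cg_rev_iff:
  assumes "\<forall>x\<in>set xs. 0 < x"
  shows "lap_eigen (sum_list xs) (cg_rev xs) \<mu> \<longleftrightarrow> \<mu> \<in> real ` cg_spectrum xs"
  using assms
proof (induction xs arbitrary: \<mu>)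
  case Nil
  then show ?case by (simp add: lap_eigen_def)
next
  case (Cons a xs)
  let ?n = "sum_list xs"
  have IH: "lap_eigen ?n (cg_rev xs) \<nu> \<longleftrightarrow> \<nu> \<in> real ` cg_spectrum xs" for \<nu>
    using Cons by simp
  have shift: "real (?n + a - k) = ?n + a - real k" if "k \<in> cg_spectrum xs" for k
    using cg_spectrum_le[OF that] by simp
  have "lap_eigen (sum_list (a # xs)) (cg_rev (a # xs)) \<mu> \<longleftrightarrow>
      \<mu> = 0 \<or> (\<exists>\<nu>::real. lap_eigen ?n (cg_rev xs) \<nu> \<and> \<mu> = ?n + a - \<nu>) \<or> (2 \<le> a \<and> \<mu> = ?n)"
    using lap_eigen_complement_union_clique_iff[where G = "cg_rev xs" and n = ?n,
        OF cg_rev_sym cg_rev_bounded, of a \<mu>] Cons.prems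
    unfolding cg_rev_Cons sum_list.Cons add.commute[of a] by simp
  also have "\<dots> \<longleftrightarrow> \<mu> \<in> real ` cg_spectrum (a # xs)"
    unfolding IH by (auto simp: shift image_iff)
  finally show ?case .
qed

lemma lap_eigenvalues_eq:
  assumes "\<forall>x\<in>set as. 0 < x"
  shows "lap_eigenvalues as = real ` cg_spectrum (rev as)"
  unfolding lap_eigenvalues_def cgraph_def
  using eigenvalue_laplacian_iff[of "cg_rev (rev as)", OF cg_rev_irrefl] lap_eigen_cg_rev_iff[of "rev as"] assms
  by auto

lemma card_lap_eigenvalues:
  "\<forall>x\<in>set as. 0 < x \<Longrightarrow> card (lap_eigenvalues as) = card (cg_spectrum (rev as))"
  by (simp add: lap_eigenvalues_eq card_image)

lemma card_cg_spectrum_Cons: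
  assumes "0 < a"
  shows "Suc (card (cg_spectrum xs)) \<le> card (cg_spectrum (a # xs))"
proof -
  let ?shift = "\<lambda>\<nu>. sum_list xs + a - \<nu>"
  have "inj_on ?shift (cg_spectrum xs)"
    by (rule inj_onI) (auto dest!: cg_spectrum_le)
  moreover have "0 \<notin> ?shift ` cg_spectrum xs"
    using assms by (auto dest!: cg_spectrum_le)
  ultimately have "Suc (card (cg_spectrum xs)) = card (insert 0 (?shift ` cg_spectrum xs))"
    by (simp add: card_image finite_cg_spectrum)
  also have "\<dots> \<le> card (cg_spectrum (a # xs))"
    by (rule card_mono) (auto simp: finite_cg_spectrum)
  finally show ?thesis .
qed

lemma length_le_card_cg_spectrum: "\<forall>x\<in>set xs. 0 < x \<Longrightarrow> length xs \<le> card (cg_spectrum xs)"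
proof (induction xs)
  case (Cons a xs)
  then show ?case using card_cg_spectrum_Cons[of a xs] by (simp del: cg_spectrum.simps)
qed simp

lemma card_cg_spectrum_two: "card (cg_spectrum [b, a]) \<le> 3"
proof -
  have "cg_spectrum [b, a] \<subseteq> {0, a + b, a}" by auto
  then have "card (cg_spectrum [b, a]) \<le> card {0, a + b, a}" by (rule card_mono[rotated]) simp
  also have "\<dots> \<le> 3" by (simp add: card_insert_le_m1)
  finally show ?thesis .
qed

lemma cg_spectrum_four:
  assumes "0 < a" "0 < b" "0 < c" "0 < d"
  shows "cg_spectrum [d, c, b, a] = {0, a + b + c + d, d, a + b + d}
    \<union> (if 2 \<le> b then {a + d} else {}) \<union> (if 2 \<le> c then {c + d} else {})
    \<union> (if 2 \<le> d then {a + b + c} else {})"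
  using assms by (cases "2 \<le> b"; cases "2 \<le> c"; cases "2 \<le> d") auto

lemma card_Un_eq_card_iff_subset:
  assumes "finite A" "finite B"
  shows "card (A \<union> B) = card A \<longleftrightarrow> B \<subseteq> A"
proof
  assume "card (A \<union> B) = card A"
  then have "A \<union> B = A" using card_subset_eq[of "A \<union> B" A] assms by auto
  then show "B \<subseteq> A" by blast
qed (simp add: Un_absorb2)

lemma card_cg_spectrum_four_eq_4_iff:
  assumes a: "0 < a" and b: "0 < b" and c: "0 < c" and d: "0 < d"
  shows "card (cg_spectrum [d, c, b, a]) = 4 \<longleftrightarrow>
     (b, c, d) \<in> {(1, 1, 1), (1, 1 + a, 1), (1, 1, 2 + a), (1, 1 + a, 1 + a), (1, 1 + a, 2 + 2 * a)}"
proof -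
  define B where "B = {0, a + b + c + d, d, a + b + d}"
  define X where "X = (if 2 \<le> b then {a + d} else {}) \<union> (if 2 \<le> c then {c + d} else {})
    \<union> (if 2 \<le> d then {a + b + c} else {})"
  have "card B = 4" "finite B" "finite X" unfolding B_def X_def using assms by auto
  then have "card (B \<union> X) = 4 \<longleftrightarrow> X \<subseteq> B"
    using card_Un_eq_card_iff_subset by metis
  also have "\<dots> \<longleftrightarrow> \<not> 2 \<le> b \<and> (2 \<le> c \<longrightarrow> c = a + b) \<and> (2 \<le> d \<longrightarrow> d = a + b + c \<or> d = c)"
    unfolding B_def X_def using assms by auto
  also have "\<dots> \<longleftrightarrow> (b, c, d) \<in> {(1, 1, 1), (1, 1 + a, 1), (1, 1, 2 + a), (1, 1 + a, 1 + a),
      (1, 1 + a, 2 + 2 * a)}"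
    using assms by (cases "b = 1"; cases "c = 1"; cases "d = 1") auto
  finally show ?thesis
    using cg_spectrum_four[OF assms] unfolding B_def X_def by simp
qed

lemma card_lap_eigenvalues_four_eq_4_iff:
  assumes "0 < a" "0 < b" "0 < c" "0 < d"
  shows "card (lap_eigenvalues [a, b, c, d]) = 4 \<longleftrightarrow>
    (b, c, d) \<in> {(1, 1, 1), (1, 1 + a, 1), (1, 1, 2 + a), (1, 1 + a, 1 + a), (1, 1 + a, 2 + 2 * a)}"
  using card_cg_spectrum_four_eq_4_iff[OF assms] card_lap_eigenvalues[of "[a, b, c, d]"] assms
  by simp

lemma card_lap_eigenvalues_eq_4_iff:
  assumes "even (length as)" "2 \<le> length as" and pos: "\<forall>x\<in>set as. 0 < x"
  shows "card (lap_eigenvalues as) = 4 \<longleftrightarrow>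
    (\<exists>a. as \<in> {[a, 1, 1, 1], [a, 1, 1 + a, 1], [a, 1, 1, 2 + a],
               [a, 1, 1 + a, 1 + a], [a, 1, 1 + a, 2 + 2 * a]})"
proof -
  have "length as = 2 \<or> length as = 4 \<or> 6 \<le> length as"
    using assms(1,2) by presburger
  then consider "length as = 2" | "length as = 4" | "6 \<le> length as"
    by blast
  then show ?thesis
  proof cases
    case 1
    then obtain x y where "as = [x, y]" by (auto simp: length_Suc_conv numeral_2_eq_2)
    then show ?thesis using card_cg_spectrum_two[of y x] card_lap_eigenvalues[OF pos] by auto
  next
    case 2
    then obtain a b c d where as: "as = [a, b, c, d]" by (auto simp: length_Suc_conv numeral_eq_Suc)
    show ?thesis
      using card_lap_eigenvalues_four_eq_4_iff[of a b c d] pos unfolding as by auto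
  next
    case 3
    then show ?thesis
      using length_le_card_cg_spectrum[of "rev as"] card_lap_eigenvalues[OF pos] pos by auto
  qed
qed

theorem mainTheorem10:
  fixes a1 a2 a3 a4 :: nat
  assumes "0 < a1" "0 < a2" "0 < a3" "0 < a4"
  shows "(card (lap_eigenvalues [a1, a2, a3, a4]) = 4 \<longleftrightarrow>
           (a2, a3, a4) \<in> {(1, 1, 1), (1, 1 + a1, 1), (1, 1, 2 + a1),
                            (1, 1 + a1, 1 + a1), (1, 1 + a1, 2 + 2 * a1)})
       \<and> (\<forall>as :: nat list. even (length as) \<and> length as \<ge> 2 \<and> (\<forall>x \<in> set as. 0 < x) \<longrightarrow>
            (card (lap_eigenvalues as) = 4 \<longleftrightarrow>
              (\<exists>a. as \<in> {[a, 1, 1, 1], [a, 1, 1 + a, 1], [a, 1, 1, 2 + a],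
                         [a, 1, 1 + a, 1 + a], [a, 1, 1 + a, 2 + 2 * a]})))"
  using card_lap_eigenvalues_four_eq_4_iff[OF assms] card_lap_eigenvalues_eq_4_iff by blast

end
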